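(* Let $(E,\rho)$ be a complete partial $v$-generalized metric space and let $S:E\to E$ satisfy $\rho(Su,Sw)\le\lambda[\rho(u,Su)+\rho(w,Sw)]$ for all $u,w\in E$, where $\lambda\in[0,\tfrac12)$. Then $S$ has a unique fixed point $b\in E$, and $\rho(b,b)=0$.
   Context: Let $E$ be a nonempty set and $v\in\mathbb{N}$. $(E,\rho)$, with $\rho:E\times E\to[0,\infty)$, is a partial $v$-generalized metric space if for all $u,w,z_1,\dots,z_v\in E$: (1) $u=w$ iff $\rho(u,u)=\rho(u,w)=\rho(w,w)$; (2) $\rho(u,u)\le\rho(u,w)$; (3) $\rho(u,w)=\rho(w,u)$; (4) $\rho(u,w)\le\rho(u,z_1)+\rho(z_1,z_2)+\dots+\rho(z_{v-1},z_v)+\rho(z_v,w)-\sum_{i=1}^v\rho(z_i,z_i)$. A sequence $\{u_n\}$ in $E$ converges to $u\in E$ if $\lim_{n\to\infty}\rho(u_n,u)=\rho(u,u)$; it is Cauchy if $\lim_{n,m\to\infty}\rho(u_n,u_m)$ exists and is finite. $(E,\rho)$ is complete if for every Cauchy sequence $\{u_n\}$ there is $u\in E$ with $\lim_{n,m\to\infty}\rho(u_n,u_m)=\lim_{n\to\infty}\rho(u_n,u)=\rho(u,u)$. *)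

theory Defs
  imports Complex_Main
begin

text \<open>The intermediate points
  z_1,...,z_v are given as a function z on indices 1..v (with z 0 = u, z (v+1) = w
  implicitly via the explicit end terms).\<close>

definition partial_v_gen_metric :: "nat \<Rightarrow> 'a set \<Rightarrow> ('a \<Rightarrow> 'a \<Rightarrow> real) \<Rightarrow> bool" where
  "partial_v_gen_metric v E \<rho> \<longleftrightarrow>
     E \<noteq> {} \<and> v \<ge> 1 \<and>
     (\<forall>u\<in>E. \<forall>w\<in>E. \<rho> u w \<ge> 0) \<and>
     (\<forall>u\<in>E. \<forall>w\<in>E. u = w \<longleftrightarrow> (\<rho> u u = \<rho> u w \<and> \<rho> u w = \<rho> w w)) \<and>
     (\<forall>u\<in>E. \<forall>w\<in>E. \<rho> u u \<le> \<rho> u w) \<and>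
     (\<forall>u\<in>E. \<forall>w\<in>E. \<rho> u w = \<rho> w u) \<and>
     (\<forall>u\<in>E. \<forall>w\<in>E. \<forall>z. (\<forall>i\<in>{1..v}. z i \<in> E) \<longrightarrow>
        \<rho> u w \<le> \<rho> u (z 1) + (\<Sum>i=1..<v. \<rho> (z i) (z (Suc i))) + \<rho> (z v) w
                  - (\<Sum>i=1..v. \<rho> (z i) (z i)))"

definition pvgm_converges :: "('a \<Rightarrow> 'a \<Rightarrow> real) \<Rightarrow> (nat \<Rightarrow> 'a) \<Rightarrow> 'a \<Rightarrow> bool" where
  "pvgm_converges \<rho> x u \<longleftrightarrow> (\<lambda>n. \<rho> (x n) u) \<longlonglongrightarrow> \<rho> u u"

definition pvgm_double_lim :: "('a \<Rightarrow> 'a \<Rightarrow> real) \<Rightarrow> (nat \<Rightarrow> 'a) \<Rightarrow> real \<Rightarrow> bool" where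
  "pvgm_double_lim \<rho> x L \<longleftrightarrow>
     ((\<lambda>(n, m). \<rho> (x n) (x m)) \<longlongrightarrow> L) (sequentially \<times>\<^sub>F sequentially)"

definition pvgm_cauchy :: "('a \<Rightarrow> 'a \<Rightarrow> real) \<Rightarrow> (nat \<Rightarrow> 'a) \<Rightarrow> bool" where
  "pvgm_cauchy \<rho> x \<longleftrightarrow> (\<exists>L. pvgm_double_lim \<rho> x L)"

definition pvgm_complete :: "'a set \<Rightarrow> ('a \<Rightarrow> 'a \<Rightarrow> real) \<Rightarrow> bool" where
  "pvgm_complete E \<rho> \<longleftrightarrow>
     (\<forall>x. (\<forall>n. x n \<in> E) \<longrightarrow> pvgm_cauchy \<rho> x \<longrightarrow>
        (\<exists>u\<in>E. pvgm_double_lim \<rho> x (\<rho> u u) \<and> pvgm_converges \<rho> x u))"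

end

theory Submission
  imports Defs
begin

text \<open>Along an orbit the successive distances \<open>d\<^sub>n\<close> satisfy
  \<open>d\<^sub>n\<^sub>+\<^sub>1 \<le> \<lambda>(d\<^sub>n + d\<^sub>n\<^sub>+\<^sub>1)\<close>, i.e. \<open>d\<^sub>n\<^sub>+\<^sub>1 \<le> \<lambda>/(1-\<lambda>) d\<^sub>n\<close> with ratio \<open>< 1\<close>, so \<open>d\<^sub>n \<rightarrow> 0\<close>.
  The contractive condition bounds \<open>\<rho>(Sx\<^sub>n, Sx\<^sub>m)\<close> by \<open>\<lambda>(d\<^sub>n + d\<^sub>m)\<close>, so the orbit is Cauchy
  with double limit 0, and completeness yields a limit \<open>u\<close> with \<open>\<rho>(u,u) = 0\<close>. Choosing all
  \<open>v\<close> intermediate points equal turns the \<open>v\<close>-fold inequality into an ordinary triangle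
  inequality; through \<open>Sx\<^sub>n\<close> it gives \<open>(1-\<lambda>)\<rho>(u,Su) \<le> \<rho>(u,Sx\<^sub>n) + \<lambda>d\<^sub>n \<rightarrow> 0\<close>, so \<open>Su = u\<close>.
  A fixed point \<open>b\<close> has \<open>\<rho>(b,b) \<le> 2\<lambda>\<rho>(b,b)\<close>, hence \<open>\<rho>(b,b) = 0\<close>, and two fixed points \<open>b, c\<close>
  have \<open>\<rho>(b,c) \<le> \<lambda>(\<rho>(b,b) + \<rho>(c,c)) = 0\<close>.\<close>

lemma
  assumes "partial_v_gen_metric v E \<rho>" "u \<in> E" "w \<in> E"
  shows partial_v_gen_metric_nonneg: "0 \<le> \<rho> u w"
    and partial_v_gen_metric_self_le: "\<rho> u u \<le> \<rho> u w"
    and partial_v_gen_metric_sym: "\<rho> u w = \<rho> w u"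
  using assms unfolding partial_v_gen_metric_def by blast+

lemma partial_v_gen_metric_zero_imp_eq:
  assumes metric: "partial_v_gen_metric v E \<rho>" and "u \<in> E" "w \<in> E" "\<rho> u w = 0"
  shows "u = w"
proof -
  have "\<rho> u u = 0" "\<rho> w w = 0"
    using assms partial_v_gen_metric_nonneg[OF metric] partial_v_gen_metric_self_le[OF metric]
      partial_v_gen_metric_sym[OF metric]
    by (metis order_antisym)+
  then show ?thesis
    using assms unfolding partial_v_gen_metric_def by auto
qed

lemma partial_v_gen_metric_triangle:
  assumes metric: "partial_v_gen_metric v E \<rho>" and "u \<in> E" "w \<in> E" "c \<in> E"
  shows "\<rho> u w \<le> \<rho> u c + \<rho> c w - \<rho> c c"
proof -
  have "v \<ge> 1"
    using metric unfolding partial_v_gen_metric_def by blast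
  have "\<forall>z. (\<forall>i\<in>{1..v}. z i \<in> E) \<longrightarrow>
      \<rho> u w \<le> \<rho> u (z 1) + (\<Sum>i=1..<v. \<rho> (z i) (z (Suc i))) + \<rho> (z v) w
                - (\<Sum>i=1..v. \<rho> (z i) (z i))"
    using metric assms(2,3) unfolding partial_v_gen_metric_def by blast
  from this[rule_format, of "\<lambda>_. c"] \<open>c \<in> E\<close> \<open>v \<ge> 1\<close> show ?thesis
    by (simp add: algebra_simps)
qed

lemma ratio_bound_tendsto_zero:
  fixes d :: "nat \<Rightarrow> real"
  assumes "\<And>n. 0 \<le> d n" "\<And>n. d (Suc n) \<le> k * d n" "k < 1"
  shows "d \<longlonglongrightarrow> 0"
  using assms by (intro summable_LIMSEQ_zero summable_ratio_test[of k 0]) auto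

lemma pvgm_double_lim_zeroI:
  assumes "\<And>n m. 0 \<le> \<rho> (x n) (x m)" "\<And>n m. \<rho> (x n) (x m) \<le> e n + e m"
    and "e \<longlonglongrightarrow> 0"
  shows "pvgm_double_lim \<rho> x 0"
  unfolding pvgm_double_lim_def
proof (rule tendsto_sandwich[where f = "\<lambda>_. 0" and h = "\<lambda>p. e (fst p) + e (snd p)"])
  have "((\<lambda>p. e (fst p)) \<longlongrightarrow> 0) (sequentially \<times>\<^sub>F sequentially)"
    "((\<lambda>p. e (snd p)) \<longlongrightarrow> 0) (sequentially \<times>\<^sub>F sequentially)"
    using filterlim_compose[OF \<open>e \<longlonglongrightarrow> 0\<close>]
      filtermap_fst_prod_filter filtermap_snd_prod_filter unfolding filterlim_def by blast+
  from tendsto_add[OF this]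
  show "((\<lambda>p. e (fst p) + e (snd p)) \<longlongrightarrow> 0) (sequentially \<times>\<^sub>F sequentially)"
    by simp
qed (use assms in \<open>auto simp: split_beta\<close>)

locale kannan_map =
  fixes v :: nat and E :: "'a set" and \<rho> :: "'a \<Rightarrow> 'a \<Rightarrow> real"
    and S :: "'a \<Rightarrow> 'a" and lam :: real
  assumes metric: "partial_v_gen_metric v E \<rho>"
    and maps_into: "\<And>u. u \<in> E \<Longrightarrow> S u \<in> E"
    and lam_less_half: "lam < 1/2"
    and kannan: "\<And>u w. u \<in> E \<Longrightarrow> w \<in> E \<Longrightarrow> \<rho> (S u) (S w) \<le> lam * (\<rho> u (S u) + \<rho> w (S w))"
begin

lemma fixed_point_self_dist_zero:
  assumes "b \<in> E" "S b = b"
  shows "\<rho> b b = 0"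
proof -
  have "(1 - 2 * lam) * \<rho> b b \<le> 0"
    using kannan[OF \<open>b \<in> E\<close> \<open>b \<in> E\<close>] \<open>S b = b\<close> by (simp add: algebra_simps)
  moreover have "0 \<le> \<rho> b b"
    using partial_v_gen_metric_nonneg[OF metric] \<open>b \<in> E\<close> by blast
  ultimately show ?thesis
    using lam_less_half by (simp add: mult_le_0_iff)
qed

lemma fixed_point_unique:
  assumes "b \<in> E" "S b = b" "c \<in> E" "S c = c"
  shows "b = c"
proof (rule partial_v_gen_metric_zero_imp_eq[OF metric \<open>b \<in> E\<close> \<open>c \<in> E\<close>])
  have "\<rho> b c \<le> lam * (\<rho> b b + \<rho> c c)"
    using kannan[OF \<open>b \<in> E\<close> \<open>c \<in> E\<close>] assms by simp
  then show "\<rho> b c = 0"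
    using fixed_point_self_dist_zero assms partial_v_gen_metric_nonneg[OF metric] by force
qed

lemma orbit_in: "x \<in> E \<Longrightarrow> (S ^^ n) x \<in> E"
  by (induction n) (auto simp: maps_into)

lemma orbit_step_tendsto_zero:
  assumes "x \<in> E"
  shows "(\<lambda>n. \<rho> ((S ^^ n) x) ((S ^^ Suc n) x)) \<longlonglongrightarrow> 0"
proof (rule ratio_bound_tendsto_zero)
  define d where "d n = \<rho> ((S ^^ n) x) ((S ^^ Suc n) x)" for n
  show "0 \<le> d n" for n
    unfolding d_def using partial_v_gen_metric_nonneg[OF metric] orbit_in[OF assms] by blast
  show "d (Suc n) \<le> lam / (1 - lam) * d n" for n
  proof -
    have "d (Suc n) \<le> lam * (d n + d (Suc n))"
      using kannan[OF orbit_in[OF assms, of n] orbit_in[OF assms, of "Suc n"]]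
      unfolding d_def by simp
    with lam_less_half show ?thesis
      by (simp add: field_simps)
  qed
  show "lam / (1 - lam) < 1"
    using lam_less_half by (simp add: field_simps)
qed

lemma orbit_double_lim_zero:
  assumes "x \<in> E"
  shows "pvgm_double_lim \<rho> (\<lambda>n. (S ^^ Suc n) x) 0"
proof (rule pvgm_double_lim_zeroI)
  show "0 \<le> \<rho> ((S ^^ Suc n) x) ((S ^^ Suc m) x)" for n m
    using partial_v_gen_metric_nonneg[OF metric] orbit_in[OF assms] by blast
  show "\<rho> ((S ^^ Suc n) x) ((S ^^ Suc m) x)
      \<le> lam * \<rho> ((S ^^ n) x) ((S ^^ Suc n) x) + lam * \<rho> ((S ^^ m) x) ((S ^^ Suc m) x)" for n m
    using kannan[OF orbit_in[OF assms, of n] orbit_in[OF assms, of m]] by (simp add: algebra_simps)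
  show "(\<lambda>n. lam * \<rho> ((S ^^ n) x) ((S ^^ Suc n) x)) \<longlonglongrightarrow> 0"
    using tendsto_mult_right_zero[OF orbit_step_tendsto_zero[OF assms]] .
qed

lemma orbit_limit_is_fixed_point:
  assumes "x \<in> E" "u \<in> E" "\<rho> u u = 0" and conv: "pvgm_converges \<rho> (\<lambda>n. (S ^^ Suc n) x) u"
  shows "S u = u"
proof -
  define A where "A = \<rho> u (S u)"
  have "(1 - lam) * A \<le> \<rho> u ((S ^^ Suc n) x) + lam * \<rho> ((S ^^ n) x) ((S ^^ Suc n) x)" for n
  proof -
    let ?y = "(S ^^ Suc n) x"
    have "?y \<in> E" "S u \<in> E"
      using orbit_in[OF assms(1)] maps_into[OF \<open>u \<in> E\<close>] by blast+
    then have "A \<le> \<rho> u ?y + \<rho> ?y (S u) - \<rho> ?y ?y" "0 \<le> \<rho> ?y ?y"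
      unfolding A_def using partial_v_gen_metric_triangle[OF metric \<open>u \<in> E\<close>]
        partial_v_gen_metric_nonneg[OF metric] by blast+
    moreover have "\<rho> ?y (S u) \<le> lam * (\<rho> ((S ^^ n) x) ?y + A)"
      using kannan[OF orbit_in[OF assms(1)] \<open>u \<in> E\<close>] unfolding A_def by simp
    ultimately show ?thesis
      by (simp add: algebra_simps del: funpow.simps)
  qed
  moreover have "(\<lambda>n. \<rho> u ((S ^^ Suc n) x)) \<longlonglongrightarrow> 0"
    using conv partial_v_gen_metric_sym[OF metric orbit_in[OF assms(1)] \<open>u \<in> E\<close>] \<open>\<rho> u u = 0\<close>
    unfolding pvgm_converges_def by (simp del: funpow.simps)
  then have "(\<lambda>n. \<rho> u ((S ^^ Suc n) x) + lam * \<rho> ((S ^^ n) x) ((S ^^ Suc n) x)) \<longlonglongrightarrow> 0"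
    using tendsto_add[OF _ tendsto_mult_right_zero[OF orbit_step_tendsto_zero[OF assms(1)]]] by simp
  ultimately have "(1 - lam) * A \<le> 0"
    by (intro tendsto_le[OF _ _ tendsto_const]) auto
  moreover have "0 \<le> A"
    unfolding A_def using partial_v_gen_metric_nonneg[OF metric] assms(2) maps_into by blast
  ultimately have "A = 0"
    using lam_less_half by (simp add: mult_le_0_iff)
  then have "u = S u"
    using partial_v_gen_metric_zero_imp_eq[OF metric \<open>u \<in> E\<close> maps_into[OF \<open>u \<in> E\<close>]]
    unfolding A_def by blast
  then show ?thesis
    by (rule sym)
qed

lemma fixed_point_exists:
  assumes "pvgm_complete E \<rho>"
  shows "\<exists>b\<in>E. S b = b"
proof -
  obtain x where "x \<in> E"
    using metric unfolding partial_v_gen_metric_def by blast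
  have "\<forall>n. (S ^^ Suc n) x \<in> E"
    using orbit_in[OF \<open>x \<in> E\<close>] by blast
  moreover have "pvgm_cauchy \<rho> (\<lambda>n. (S ^^ Suc n) x)"
    unfolding pvgm_cauchy_def using orbit_double_lim_zero[OF \<open>x \<in> E\<close>] by blast
  ultimately have "\<exists>u\<in>E. pvgm_double_lim \<rho> (\<lambda>n. (S ^^ Suc n) x) (\<rho> u u)
      \<and> pvgm_converges \<rho> (\<lambda>n. (S ^^ Suc n) x) u"
    using assms unfolding pvgm_complete_def by (elim allE[of _ "\<lambda>n. (S ^^ Suc n) x"]) simp
  then obtain u where "u \<in> E" and lim: "pvgm_double_lim \<rho> (\<lambda>n. (S ^^ Suc n) x) (\<rho> u u)"
    and conv: "pvgm_converges \<rho> (\<lambda>n. (S ^^ Suc n) x) u"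
    by blast
  have "\<rho> u u = 0"
    using tendsto_unique[OF _ lim[unfolded pvgm_double_lim_def]
        orbit_double_lim_zero[OF \<open>x \<in> E\<close>, unfolded pvgm_double_lim_def]]
    by (simp add: prod_filter_eq_bot)
  then have "S u = u"
    using orbit_limit_is_fixed_point[OF \<open>x \<in> E\<close> \<open>u \<in> E\<close> _ conv] by blast
  with \<open>u \<in> E\<close> show ?thesis
    by blast
qed

end

theorem mainTheorem6:
  fixes E :: "'a set" and \<rho> :: "'a \<Rightarrow> 'a \<Rightarrow> real" and v :: nat
    and S :: "'a \<Rightarrow> 'a" and lam :: real
  assumes "partial_v_gen_metric v E \<rho>"
    and "pvgm_complete E \<rho>"
    and "\<forall>u\<in>E. S u \<in> E"
    and "0 \<le> lam" and "lam < 1/2"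
    and "\<forall>u\<in>E. \<forall>w\<in>E. \<rho> (S u) (S w) \<le> lam * (\<rho> u (S u) + \<rho> w (S w))"
  shows "(\<exists>!b. b \<in> E \<and> S b = b) \<and> (\<forall>b\<in>E. S b = b \<longrightarrow> \<rho> b b = 0)"
proof -
  interpret kannan_map v E \<rho> S lam
    using assms by unfold_locales auto
  show ?thesis
    using fixed_point_exists[OF assms(2)] fixed_point_unique fixed_point_self_dist_zero by blast
qed

end
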